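(* Let $m\ge1$ and $y\in\mathbb{R}^{2m+1}_+$. Then $$\min_{x\in\mathbb{R}^{m+1}_+}\mathcal{I}(y\|x*x)=\min_{\mathbf{Y}\in\boldsymbol{\mathcal{Y}},\,\mathbf{W}\in\boldsymbol{\mathcal{W}}}\mathcal{I}(\mathbf{Y}\|\mathbf{W}).$$
   Context: For $x\in\mathbb{R}^{m+1}$ set $x_k=0$ for $k<0$, $k>m$, and $(x*x)_i=\sum_{j=0}^i x_{i-j}x_j$, $i=0,\dots,2m$. Matrices are indexed by rows $i=0,\dots,2m$ and columns $j=0,\dots,m$. $\boldsymbol{\mathcal{Y}}$ is the set of $\mathbf{Y}\in\mathbb{R}^{(2m+1)\times(m+1)}_+$ with $\mathbf{Y}_{ij}=0$ for $i<j$ and $i>j+m$ and with row sums $\sum_j\mathbf{Y}_{ij}=y_i$. $\boldsymbol{\mathcal{W}}$ is the set of matrices with $\mathbf{W}_{ij}=x_{i-j}x_j$ for $0\le j\le m$, $j\le i\le j+m$, and $\mathbf{W}_{ij}=0$ otherwise, for some $x\in\mathbb{R}^{m+1}_+$. For nonnegative arrays $M,N$ of the same size, $\mathcal{I}(M\|N)=\sum\big(M\log\frac{M}{N}-M+N\big)$ entrywise summed (convention $0\log0=0$; $+\infty$ if some entry has $M>0=N$). *)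

theory Defs
  imports Complex_Main "HOL-Library.Extended_Real"
begin

(* Vectors x in R^{m+1} are functions nat => real, only indices 0..m matter;
   entries with index > m are treated as 0 (convention x_k = 0 for k > m). *)
definition ext :: "nat \<Rightarrow> (nat \<Rightarrow> real) \<Rightarrow> nat \<Rightarrow> real" where
  "ext m x k = (if k \<le> m then x k else 0)"

definition conv :: "nat \<Rightarrow> (nat \<Rightarrow> real) \<Rightarrow> nat \<Rightarrow> real" where
  "conv m x i = (\<Sum>j=0..i. ext m x (i - j) * ext m x j)"

definition ient :: "real \<Rightarrow> real \<Rightarrow> ereal" where
  "ient M N = (if M = 0 then ereal N
               else if N = 0 then \<infinity>
               else ereal (M * ln (M / N) - M + N))"

definition idiv :: "'a set \<Rightarrow> ('a \<Rightarrow> real) \<Rightarrow> ('a \<Rightarrow> real) \<Rightarrow> ereal" where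
  "idiv A M N = (\<Sum>a\<in>A. ient (M a) (N a))"

definition matidx :: "nat \<Rightarrow> (nat \<times> nat) set" where
  "matidx m = {0..2*m} \<times> {0..m}"

definition Ycal :: "nat \<Rightarrow> (nat \<Rightarrow> real) \<Rightarrow> (nat \<Rightarrow> nat \<Rightarrow> real) set" where
  "Ycal m y = {Y. (\<forall>i\<le>2*m. \<forall>j\<le>m. Y i j \<ge> 0 \<and> ((i < j \<or> i > j + m) \<longrightarrow> Y i j = 0))
                 \<and> (\<forall>i\<le>2*m. (\<Sum>j=0..m. Y i j) = y i)}"

definition Wcal :: "nat \<Rightarrow> (nat \<Rightarrow> nat \<Rightarrow> real) set" where
  "Wcal m = {W. \<exists>x. (\<forall>k\<le>m. x k \<ge> 0) \<and>
                 (\<forall>i\<le>2*m. \<forall>j\<le>m. W i j = (if j \<le> i \<and> i \<le> j + m then x (i - j) * x j else 0))}"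

end

theory Submission
  imports Defs "HOL-Analysis.Analysis"
begin

text \<open>By the log-sum inequality, \<open>\<I>\<close> can only decrease when a matrix is replaced by its
  vector of row sums.  The row sums of \<open>Y \<in> \<Y>\<close> are \<open>y\<close> and those of the matrix
  \<open>W\<^sub>i\<^sub>j = x\<^sub>i\<^sub>-\<^sub>j x\<^sub>j\<close> are \<open>(x * x)\<^sub>i\<close>, so \<open>\<I>(Y \<parallel> W) \<ge> \<I>(y \<parallel> x * x)\<close>, with equality for the
  conditional split \<open>Y\<^sub>i\<^sub>j = y\<^sub>i W\<^sub>i\<^sub>j / (x * x)\<^sub>i\<close>.  Hence the two minima agree as soon as the
  vector problem has a minimiser \<open>x\<^sub>0\<close>, which exists because \<open>x \<mapsto> \<I>(y \<parallel> x * x)\<close> is continuous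
  into \<open>[0, \<infinity>]\<close> and coercive, \<open>\<I>(y \<parallel> x * x) \<ge> x\<^sub>k\<^sup>2/2 - y\<^sub>2\<^sub>k\<close>.\<close>

section \<open>I-divergence of nonnegative reals\<close>

lemma ient_nonneg:
  assumes "0 \<le> M" "0 \<le> N"
  shows "0 \<le> ient M N"
proof (cases "M = 0 \<or> N = 0")
  case True
  then show ?thesis using assms by (auto simp: ient_def)
next
  case False
  then have "0 < M" "0 < N" using assms by auto
  have "M * ln (N / M) \<le> M * (N / M - 1)"
    using \<open>0 < M\<close> \<open>0 < N\<close> by (intro mult_left_mono ln_le_minus_one) auto
  also have "\<dots> = N - M"
    using \<open>0 < M\<close> by (simp add: field_simps)
  finally show ?thesis
    using \<open>0 < M\<close> \<open>0 < N\<close> by (simp add: ient_def ln_div algebra_simps)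
qed

lemma ient_ge_half_minus:
  assumes "0 \<le> M" "0 \<le> N"
  shows "ereal (N / 2 - M) \<le> ient M N"
proof (cases "M = 0 \<or> N = 0")
  case True
  then show ?thesis using assms by (auto simp: ient_def)
next
  case False
  then have "0 < M" "0 < N" using assms by auto
  have ln_le_half: "ln u \<le> u / 2" if "0 < u" for u :: real
    using ln_le_minus_one[of "u / 2"] ln_2_less_1 that by (simp add: ln_div)
  have "M * ln (N / M) \<le> M * (N / M / 2)"
    using \<open>0 < M\<close> \<open>0 < N\<close> by (intro mult_left_mono ln_le_half) auto
  also have "\<dots> = N / 2"
    using \<open>0 < M\<close> by (simp add: field_simps)
  finally show ?thesis
    using \<open>0 < M\<close> \<open>0 < N\<close> by (simp add: ient_def ln_div algebra_simps)
qed

lemma log_sum_le: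
  fixes a b c d :: real
  assumes "0 < a" "0 < b" "0 < c" "0 < d"
  shows "(a + b) * ln ((a + b) / (c + d)) \<le> a * ln (a / c) + b * ln (b / d)"
proof -
  define s t where "s = a + b" and "t = c + d"
  have "0 < s" "0 < t" using assms by (auto simp: s_def t_def)
  have ln_ge: "1 - 1 / u \<le> ln u" if "0 < u" for u :: real
    using ln_le_minus_one[of "1 / u"] that by (simp add: ln_div)
  have "ln (a * t / (c * s)) = ln (a / c) - ln (s / t)"
    and "ln (b * t / (d * s)) = ln (b / d) - ln (s / t)"
    using assms \<open>0 < s\<close> \<open>0 < t\<close> by (simp_all add: ln_div ln_mult)
  then have "a * (1 - (c * s) / (a * t)) \<le> a * (ln (a / c) - ln (s / t))"
    and "b * (1 - (d * s) / (b * t)) \<le> b * (ln (b / d) - ln (s / t))"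
    using assms \<open>0 < s\<close> \<open>0 < t\<close> ln_ge[of "a * t / (c * s)"] ln_ge[of "b * t / (d * s)"]
    by (auto intro!: mult_left_mono)
  moreover have "a * (1 - (c * s) / (a * t)) + b * (1 - (d * s) / (b * t)) = s - (c + d) * s / t"
    using assms \<open>0 < t\<close> by (simp add: s_def field_simps)
  moreover have "s - (c + d) * s / t = 0"
    using \<open>0 < t\<close> by (simp add: t_def)
  ultimately have "0 \<le> a * (ln (a / c) - ln (s / t)) + b * (ln (b / d) - ln (s / t))"
    by linarith
  then show ?thesis
    by (simp add: s_def t_def algebra_simps)
qed

lemma ient_add_le:
  fixes a b c d :: real
  assumes "0 \<le> a" "0 \<le> b" "0 \<le> c" "0 \<le> d"
  shows "ient (a + b) (c + d) \<le> ient a c + ient b d"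
proof -
  have "0 \<le> ient a c" "0 \<le> ient b d" using assms by (simp_all add: ient_nonneg)
  have ln_mono_denom: "x * ln (x / (u + v)) \<le> x * ln (x / u)"
    if "0 < x" "0 < u" "0 \<le> v" for x u v :: real
    using that by (intro mult_left_mono ln_mono divide_left_mono) auto
  consider "a = 0" | "b = 0" | "0 < a" "0 < b" "c = 0" | "0 < a" "0 < b" "d = 0"
    | "0 < a" "0 < b" "0 < c" "0 < d"
    using assms by linarith
  then show ?thesis
  proof cases
    case 1
    then show ?thesis
      using assms \<open>0 \<le> ient b d\<close> ln_mono_denom[of b d c] by (auto simp: ient_def add.commute)
  next
    case 2
    then show ?thesis
      using assms \<open>0 \<le> ient a c\<close> ln_mono_denom[of a c d] by (auto simp: ient_def)
  next
    case 3
    then show ?thesis using \<open>0 \<le> ient b d\<close> by (simp add: ient_def)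
  next
    case 4
    then show ?thesis using \<open>0 \<le> ient a c\<close> by (simp add: ient_def)
  next
    case 5
    then show ?thesis using log_sum_le[of a b c d] by (simp add: ient_def)
  qed
qed

lemma ient_sum_le:
  assumes "finite A" "\<And>k. k \<in> A \<Longrightarrow> 0 \<le> a k" "\<And>k. k \<in> A \<Longrightarrow> 0 \<le> c k"
  shows "ient (\<Sum>k\<in>A. a k) (\<Sum>k\<in>A. c k) \<le> (\<Sum>k\<in>A. ient (a k) (c k))"
  using assms
proof (induction A rule: finite_induct)
  case empty
  then show ?case by (simp add: ient_def)
next
  case (insert x F)
  have "ient (a x + (\<Sum>k\<in>F. a k)) (c x + (\<Sum>k\<in>F. c k))
      \<le> ient (a x) (c x) + ient (\<Sum>k\<in>F. a k) (\<Sum>k\<in>F. c k)"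
    using insert.prems by (intro ient_add_le sum_nonneg) auto
  also have "\<dots> \<le> ient (a x) (c x) + (\<Sum>k\<in>F. ient (a k) (c k))"
    using insert by (intro add_left_mono) auto
  finally show ?case using insert.hyps by simp
qed

lemma sum_ient_proportional:
  assumes "finite J" "\<And>j. j \<in> J \<Longrightarrow> 0 \<le> w j" "0 < sum w J" "0 \<le> M"
  shows "(\<Sum>j\<in>J. ient (M * w j / sum w J) (w j)) = ient M (sum w J)"
proof (cases "M = 0")
  case True
  then show ?thesis by (simp add: ient_def)
next
  case False
  define S where "S = sum w J"
  have "0 < M" "0 < S" using False assms by (auto simp: S_def)
  define r where "r = M / S"
  have "ient (r * w j) (w j) = ereal (r * ln r * w j - r * w j + w j)" for j
    using \<open>0 < M\<close> \<open>0 < S\<close> by (cases "w j = 0") (auto simp: ient_def r_def)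
  then have "(\<Sum>j\<in>J. ient (r * w j) (w j)) = ereal (r * ln r * S - r * S + S)"
    by (simp add: sum.distrib sum_subtractf S_def flip: sum_distrib_left)
  also have "\<dots> = ient M S"
    using \<open>0 < M\<close> \<open>0 < S\<close> by (simp add: ient_def r_def)
  finally show ?thesis by (simp add: S_def r_def)
qed

lemma sum_ient_zero_right:
  assumes "finite J" "\<And>j. j \<in> J \<Longrightarrow> 0 \<le> Y j"
  shows "(\<Sum>j\<in>J. ient (Y j) 0) = ient (sum Y J) 0"
proof (cases "\<forall>j\<in>J. Y j = 0")
  case True
  then show ?thesis by (simp add: ient_def)
next
  case False
  then obtain j where "j \<in> J" "0 < Y j" using assms(2) by force
  then have "0 < sum Y J"
    using assms by (intro sum_pos2) auto
  then show ?thesis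
    using \<open>j \<in> J\<close> \<open>0 < Y j\<close> assms(1) by (auto simp: ient_def sum_Pinfty intro!: bexI[of _ j])
qed

lemma ient_tendsto_infinity_at_0:
  assumes "0 < M"
  shows "(ient M \<longlongrightarrow> \<infinity>) (at_right 0)"
proof -
  define g where "g N = M * ln (M / N) - M + N" for N
  have "filterlim (\<lambda>N. M * - ln N) at_top (at_right 0)"
    by (rule filterlim_tendsto_pos_mult_at_top [OF tendsto_const \<open>0 < M\<close>])
      (simp add: filterlim_uminus_at_top ln_at_0)
  then have "filterlim (\<lambda>N. (M * ln M - M + N) + M * - ln N) at_top (at_right 0)"
    by (rule filterlim_tendsto_add_at_top [rotated]) (auto intro!: tendsto_eq_intros)
  moreover have "\<forall>\<^sub>F N in at_right 0. (M * ln M - M + N) + M * - ln N = g N"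
    using eventually_at_right_less
    by eventually_elim (use \<open>0 < M\<close> in \<open>simp add: g_def ln_div algebra_simps\<close>)
  ultimately have "filterlim g at_top (at_right 0)"
    by (rule filterlim_cong [OF refl refl, THEN iffD1, rotated])
  then have "((\<lambda>N. ereal (g N)) \<longlongrightarrow> \<infinity>) (at_right 0)"
    by (simp add: tendsto_PInfty_eq_at_top)
  moreover have "\<forall>\<^sub>F N in at_right 0. ereal (g N) = ient M N"
    using eventually_at_right_less
    by eventually_elim (use \<open>0 < M\<close> in \<open>simp add: ient_def g_def\<close>)
  ultimately show ?thesis
    by (rule tendsto_cong [THEN iffD1, rotated])
qed

lemma continuous_on_ient:
  assumes "0 \<le> M"
  shows "continuous_on {0..} (ient M)"
proof (cases "M = 0")
  case True
  then show ?thesis by (simp add: ient_def continuous_on_ereal)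
next
  case False
  then have "0 < M" using assms by simp
  have "continuous_on {0<..} (\<lambda>N. ereal (M * ln (M / N) - M + N))"
    using \<open>0 < M\<close> by (auto intro!: continuous_intros)
  then have "continuous_on {0<..} (ient M)"
    by (rule continuous_on_cong [THEN iffD1, rotated 2]) (use \<open>0 < M\<close> in \<open>simp_all add: ient_def\<close>)
  then have "(ient M \<longlongrightarrow> ient M N) (at N within {0..})" if "0 < N" for N
    using that
    by (metis at_within_open continuous_on_def greaterThan_iff open_greaterThan tendsto_within_subset top_greatest)
  moreover have "(ient M \<longlongrightarrow> ient M 0) (at 0 within {0..})"
    using ient_tendsto_infinity_at_0 [OF \<open>0 < M\<close>] \<open>0 < M\<close>
    by (simp add: at_within_Ici_at_right ient_def)
  ultimately show ?thesis
    unfolding continuous_on_def by (metis atLeast_iff order_le_less)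
qed

lemma continuous_on_sum_ereal_nonneg:
  fixes f :: "'i \<Rightarrow> 'a::topological_space \<Rightarrow> ereal"
  assumes "finite A" "\<And>i. i \<in> A \<Longrightarrow> continuous_on S (f i)"
    and "\<And>i x. i \<in> A \<Longrightarrow> x \<in> S \<Longrightarrow> 0 \<le> f i x"
  shows "continuous_on S (\<lambda>x. \<Sum>i\<in>A. f i x)"
  using assms
proof (induction A rule: finite_induct)
  case empty
  then show ?case by simp
next
  case (insert a A)
  show ?case
    unfolding continuous_on_def sum.insert [OF insert.hyps]
  proof
    fix x assume "x \<in> S"
    show "((\<lambda>x. f a x + (\<Sum>i\<in>A. f i x)) \<longlongrightarrow> f a x + (\<Sum>i\<in>A. f i x)) (at x within S)"
    proof (rule tendsto_add_ereal_nonneg)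
      show "f a x \<noteq> - \<infinity>" "(\<Sum>i\<in>A. f i x) \<noteq> - \<infinity>"
        using insert.prems(2) \<open>x \<in> S\<close> sum_nonneg [of A "\<lambda>i. f i x"] by fastforce+
      show "(f a \<longlongrightarrow> f a x) (at x within S)"
        using insert.prems(1) \<open>x \<in> S\<close> by (simp add: continuous_on_def)
      show "((\<lambda>x. \<Sum>i\<in>A. f i x) \<longlongrightarrow> (\<Sum>i\<in>A. f i x)) (at x within S)"
        using insert \<open>x \<in> S\<close> by (simp add: continuous_on_def)
    qed
  qed
qed

lemma idiv_nonneg:
  assumes "\<And>a. a \<in> A \<Longrightarrow> 0 \<le> M a" "\<And>a. a \<in> A \<Longrightarrow> 0 \<le> N a"
  shows "0 \<le> idiv A M N"
  unfolding idiv_def using assms by (intro sum_nonneg ient_nonneg) auto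

lemma idiv_product:
  "idiv (A \<times> B) (\<lambda>(i, j). Y i j) (\<lambda>(i, j). W i j) = (\<Sum>i\<in>A. \<Sum>j\<in>B. ient (Y i j) (W i j))"
  unfolding idiv_def sum.cartesian_product by (intro sum.cong) auto

lemma idiv_row_sums_le:
  assumes "finite A" "finite B"
    and "\<And>i j. i \<in> A \<Longrightarrow> j \<in> B \<Longrightarrow> 0 \<le> Y i j"
    and "\<And>i j. i \<in> A \<Longrightarrow> j \<in> B \<Longrightarrow> 0 \<le> W i j"
  shows "idiv A (\<lambda>i. \<Sum>j\<in>B. Y i j) (\<lambda>i. \<Sum>j\<in>B. W i j)
           \<le> idiv (A \<times> B) (\<lambda>(i, j). Y i j) (\<lambda>(i, j). W i j)"
  unfolding idiv_product unfolding idiv_def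
  using assms by (intro sum_mono ient_sum_le) auto

lemma compact_PiE_UNIV:
  fixes B :: "'i \<Rightarrow> 'a::topological_space set"
  assumes "\<And>k. compact (B k)"
  shows "compact (\<Pi>\<^sub>E k\<in>UNIV. B k)"
proof -
  have "compactin (product_topology (\<lambda>_. euclidean) UNIV) (\<Pi>\<^sub>E k\<in>UNIV. B k)"
    using assms by (subst compactin_PiE) auto
  then show ?thesis
    by (simp add: euclidean_product_topology)
qed

section \<open>Convolution squares and their matrices\<close>

lemma conv_nonneg: "\<forall>k\<le>m. 0 \<le> x k \<Longrightarrow> 0 \<le> conv m x i"
  unfolding conv_def ext_def by (intro sum_nonneg) auto

lemma conv_pos:
  assumes "\<forall>k\<le>m. 0 < x k" "i \<le> 2 * m"
  shows "0 < conv m x i"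
proof -
  have "ext m x (i - min i m) * ext m x (min i m) \<le> conv m x i"
    unfolding conv_def ext_def using assms(1) by (intro member_le_sum) (auto simp: less_imp_le)
  moreover have "0 < ext m x (i - min i m) * ext m x (min i m)"
    using assms by (simp add: ext_def)
  ultimately show ?thesis by linarith
qed

lemma conv_cong:
  assumes "\<forall>k\<le>m. x k = x' k"
  shows "conv m x = conv m x'"
  unfolding conv_def ext_def using assms by (intro ext sum.cong) auto

lemma square_le_conv:
  assumes "\<forall>k\<le>m. 0 \<le> x k" "k \<le> m"
  shows "x k * x k \<le> conv m x (2 * k)"
proof -
  have "ext m x (2 * k - k) * ext m x k \<le> conv m x (2 * k)"
    unfolding conv_def ext_def using assms(1) by (intro member_le_sum) auto
  then show ?thesis using assms(2) by (simp add: ext_def)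
qed

lemma continuous_on_conv: "continuous_on S (\<lambda>x. conv m x i)"
proof -
  have "continuous_on S (\<lambda>x. ext m x k)" for k
    using continuous_on_product_then_coordinatewise [OF continuous_on_id]
    by (cases "k \<le> m") (simp_all add: ext_def)
  then show ?thesis
    unfolding conv_def by (intro continuous_intros)
qed

definition conv_matrix :: "nat \<Rightarrow> (nat \<Rightarrow> real) \<Rightarrow> nat \<Rightarrow> nat \<Rightarrow> real" where
  "conv_matrix m x i j = (if j \<le> i \<and> i \<le> j + m then x (i - j) * x j else 0)"

lemma conv_matrix_nonneg: "\<forall>k\<le>m. 0 \<le> x k \<Longrightarrow> j \<le> m \<Longrightarrow> 0 \<le> conv_matrix m x i j"
  by (auto simp: conv_matrix_def)

lemma Wcal_iff_conv_matrix:
  "W \<in> Wcal m \<longleftrightarrow> (\<exists>x. (\<forall>k\<le>m. 0 \<le> x k) \<and> (\<forall>i\<le>2 * m. \<forall>j\<le>m. W i j = conv_matrix m x i j))"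
  by (simp add: Wcal_def conv_matrix_def)

lemma sum_conv_matrix_row:
  assumes "i \<le> 2 * m"
  shows "(\<Sum>j=0..m. conv_matrix m x i j) = conv m x i"
proof -
  have "(\<Sum>j=0..m. conv_matrix m x i j) = (\<Sum>j\<in>{j\<in>{0..m}. j \<le> i \<and> i \<le> j + m}. x (i - j) * x j)"
    unfolding conv_matrix_def by (rule sum.inter_filter [symmetric]) simp
  also have "{j\<in>{0..m}. j \<le> i \<and> i \<le> j + m} = {j\<in>{0..i}. j \<le> m \<and> i - j \<le> m}"
    by auto
  also have "(\<Sum>j\<in>\<dots>. x (i - j) * x j) = (\<Sum>j=0..i. if j \<le> m \<and> i - j \<le> m then x (i - j) * x j else 0)"
    by (rule sum.inter_filter) simp
  also have "\<dots> = conv m x i"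
    unfolding conv_def ext_def by (intro sum.cong) auto
  finally show ?thesis .
qed

section \<open>The two minimisation problems\<close>

lemma idiv_conv_finite:
  assumes "\<forall>k\<le>m. 0 < x k"
  shows "idiv {0..2 * m} y (conv m x) \<noteq> \<infinity>"
proof -
  have "ient (y i) (conv m x i) \<noteq> \<infinity>" if "i \<le> 2 * m" for i
    using conv_pos [OF assms that] by (simp add: ient_def)
  then show ?thesis
    unfolding idiv_def by (simp add: sum_Pinfty)
qed

lemma idiv_conv_ge_square:
  assumes "\<forall>i\<le>2 * m. 0 \<le> y i" "\<forall>k\<le>m. 0 \<le> x k" "k \<le> m"
  shows "ereal (x k * x k / 2 - y (2 * k)) \<le> idiv {0..2 * m} y (conv m x)"
proof -
  have "ereal (x k * x k / 2 - y (2 * k)) \<le> ereal (conv m x (2 * k) / 2 - y (2 * k))"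
    using square_le_conv [OF assms(2,3)] by simp
  also have "\<dots> \<le> ient (y (2 * k)) (conv m x (2 * k))"
    using assms by (intro ient_ge_half_minus conv_nonneg) auto
  also have "\<dots> \<le> idiv {0..2 * m} y (conv m x)"
  proof -
    have "0 \<le> ient (y i) (conv m x i)" if "i \<le> 2 * m" for i
      using assms that by (simp add: ient_nonneg conv_nonneg)
    then show ?thesis
      unfolding idiv_def using \<open>k \<le> m\<close>
        sum_mono2 [of "{0..2 * m}" "{2 * k}" "\<lambda>i. ient (y i) (conv m x i)"] by simp
  qed
  finally show ?thesis .
qed

lemma idiv_conv_gt_if_large:
  assumes "\<forall>i\<le>2 * m. 0 \<le> y i" "\<forall>k\<le>m. 0 \<le> x k" "k \<le> m"
    and "2 + \<bar>C\<bar> + (\<Sum>i=0..2 * m. y i) < x k"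
  shows "ereal C < idiv {0..2 * m} y (conv m x)"
proof -
  have "0 \<le> (\<Sum>i=0..2 * m. y i)" "y (2 * k) \<le> (\<Sum>i=0..2 * m. y i)"
    using assms(1,3) by (auto intro: sum_nonneg member_le_sum)
  moreover have "2 * x k \<le> x k * x k"
    using assms(4) \<open>0 \<le> (\<Sum>i=0..2 * m. y i)\<close> by (intro mult_right_mono) auto
  ultimately have "C < x k * x k / 2 - y (2 * k)"
    using assms(4) by linarith
  then have "ereal C < ereal (x k * x k / 2 - y (2 * k))"
    by simp
  also have "\<dots> \<le> idiv {0..2 * m} y (conv m x)"
    by (rule idiv_conv_ge_square [OF assms(1-3)])
  finally show ?thesis .
qed

lemma continuous_on_idiv_conv:
  assumes "\<forall>i\<le>2 * m. 0 \<le> y i"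
  shows "continuous_on {x. \<forall>k\<le>m. 0 \<le> x k} (\<lambda>x. idiv {0..2 * m} y (conv m x))"
  unfolding idiv_def
proof (rule continuous_on_sum_ereal_nonneg)
  fix i assume "i \<in> {0..2 * m}"
  then show "continuous_on {x. \<forall>k\<le>m. 0 \<le> x k} (\<lambda>x. ient (y i) (conv m x i))"
    using assms
    by (intro continuous_on_compose2 [OF continuous_on_ient continuous_on_conv]) (auto intro: conv_nonneg)
  fix x :: "nat \<Rightarrow> real" assume "x \<in> {x. \<forall>k\<le>m. 0 \<le> x k}"
  then show "0 \<le> ient (y i) (conv m x i)"
    using assms \<open>i \<in> {0..2 * m}\<close> by (intro ient_nonneg conv_nonneg) auto
qed simp

lemma idiv_conv_attains_min:
  assumes "\<forall>i\<le>2 * m. 0 \<le> y i"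
  shows "\<exists>x0. (\<forall>k\<le>m. 0 \<le> x0 k) \<and> (\<forall>x. (\<forall>k\<le>m. 0 \<le> x k) \<longrightarrow>
           idiv {0..2 * m} y (conv m x0) \<le> idiv {0..2 * m} y (conv m x))"
proof -
  define F where "F x = idiv {0..2 * m} y (conv m x)" for x
  define z :: "nat \<Rightarrow> real" where "z k = (if k \<le> m then 1 else 0)" for k
  have "F z \<noteq> \<infinity>" "0 \<le> F z"
    unfolding F_def using assms
    by (auto simp: z_def intro!: idiv_conv_finite idiv_nonneg conv_nonneg)
  then obtain C where C: "F z = ereal C" by (cases "F z") auto
  define R where "R = 2 + \<bar>C\<bar> + (\<Sum>i=0..2 * m. y i)"
  define K where "K = (\<Pi>\<^sub>E k\<in>UNIV. if k \<le> m then {0..R} else {0})"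
  have "compact K"
    unfolding K_def by (rule compact_PiE_UNIV) simp
  have "0 \<le> (\<Sum>i=0..2 * m. y i)"
    using assms by (intro sum_nonneg) auto
  then have "z \<in> K"
    by (auto simp: K_def z_def R_def PiE_iff)
  have K_nonneg: "K \<subseteq> {x. \<forall>k\<le>m. 0 \<le> x k}"
  proof (intro subsetI CollectI allI impI)
    fix x k assume "x \<in> K" "k \<le> m"
    have "x k \<in> (if k \<le> m then {0..R} else {0})"
      using \<open>x \<in> K\<close> unfolding K_def by (rule PiE_mem) simp
    then show "0 \<le> x k"
      using \<open>k \<le> m\<close> by simp
  qed
  then have "continuous_on K F"
    unfolding F_def by (rule continuous_on_subset [OF continuous_on_idiv_conv [OF assms]])
  then obtain x0 where "x0 \<in> K" and x0_min: "\<And>x. x \<in> K \<Longrightarrow> F x0 \<le> F x"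
    using continuous_attains_inf [OF \<open>compact K\<close>] \<open>z \<in> K\<close> by blast
  have "F x0 \<le> F x" if "\<forall>k\<le>m. 0 \<le> x k" for x
  proof (cases "\<forall>k\<le>m. x k \<le> R")
    case True
    define x' where "x' k = (if k \<le> m then x k else 0)" for k
    have "x' \<in> K" using True that by (auto simp: K_def x'_def)
    moreover have "F x' = F x"
      unfolding F_def using conv_cong [of m x' x] by (simp add: x'_def)
    ultimately show ?thesis using x0_min by fastforce
  next
    case False
    then obtain k where "k \<le> m" "R < x k" by auto
    then have "ereal C < F x"
      unfolding F_def R_def using assms that by (intro idiv_conv_gt_if_large)
    then show ?thesis using x0_min [OF \<open>z \<in> K\<close>] C by simp
  qed
  then show ?thesis
    using \<open>x0 \<in> K\<close> K_nonneg unfolding F_def by blast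
qed

lemma idiv_conv_le_idiv_matrix:
  assumes "Y \<in> Ycal m y" "W \<in> Wcal m"
  shows "\<exists>x. (\<forall>k\<le>m. 0 \<le> x k) \<and>
           idiv {0..2 * m} y (conv m x) \<le> idiv (matidx m) (\<lambda>(i, j). Y i j) (\<lambda>(i, j). W i j)"
proof -
  obtain x where x: "\<forall>k\<le>m. 0 \<le> x k"
    and W: "\<forall>i\<le>2 * m. \<forall>j\<le>m. W i j = conv_matrix m x i j"
    using assms(2) unfolding Wcal_iff_conv_matrix by blast
  have row_W: "(\<Sum>j=0..m. W i j) = conv m x i" if "i \<le> 2 * m" for i
  proof -
    have "(\<Sum>j=0..m. W i j) = (\<Sum>j=0..m. conv_matrix m x i j)"
      using W that by (intro sum.cong) auto
    then show ?thesis
      using sum_conv_matrix_row [OF that] by simp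
  qed
  have W_nonneg: "0 \<le> W i j" if "i \<le> 2 * m" "j \<le> m" for i j
    using W conv_matrix_nonneg [OF x] that by simp
  have row_Y: "(\<Sum>j=0..m. Y i j) = y i" if "i \<le> 2 * m" for i
    using assms(1) that by (simp add: Ycal_def)
  have "idiv {0..2 * m} y (conv m x) = idiv {0..2 * m} (\<lambda>i. \<Sum>j=0..m. Y i j) (\<lambda>i. \<Sum>j=0..m. W i j)"
    unfolding idiv_def by (intro sum.cong) (simp_all add: row_W row_Y)
  also have "\<dots> \<le> idiv ({0..2 * m} \<times> {0..m}) (\<lambda>(i, j). Y i j) (\<lambda>(i, j). W i j)"
    using assms(1) W_nonneg by (intro idiv_row_sums_le) (auto simp: Ycal_def)
  finally show ?thesis
    unfolding matidx_def using x by (intro exI [of _ x] conjI)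
qed

text \<open>A zero row of the matrix of \<open>x\<close> can only carry mass at infinite cost, so there the whole
  of \<open>y i\<close> is put into the entry \<open>j = min i m\<close>, which always lies in the admissible band.\<close>

definition cond_split :: "nat \<Rightarrow> (nat \<Rightarrow> real) \<Rightarrow> (nat \<Rightarrow> real) \<Rightarrow> nat \<Rightarrow> nat \<Rightarrow> real" where
  "cond_split m y x i j =
     (if conv m x i = 0 then (if j = min i m then y i else 0)
      else y i * conv_matrix m x i j / conv m x i)"

lemma sum_cond_split_row:
  assumes "i \<le> 2 * m"
  shows "(\<Sum>j=0..m. cond_split m y x i j) = y i"
proof (cases "conv m x i = 0")
  case True
  then show ?thesis by (simp add: cond_split_def)
next
  case False
  then show ?thesis
    using sum_conv_matrix_row [OF assms]
    by (simp add: cond_split_def flip: sum_divide_distrib sum_distrib_left)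
qed

lemma cond_split_in_Ycal:
  assumes "\<forall>i\<le>2 * m. 0 \<le> y i" "\<forall>k\<le>m. 0 \<le> x k"
  shows "cond_split m y x \<in> Ycal m y"
  unfolding Ycal_def
proof (intro CollectI conjI allI impI)
  fix i j assume "i \<le> 2 * m" "j \<le> m"
  then show "0 \<le> cond_split m y x i j"
    using assms conv_matrix_nonneg [OF assms(2)] conv_nonneg [OF assms(2)]
    by (simp add: cond_split_def)
  assume "i < j \<or> j + m < i"
  then have outside: "\<not> (j \<le> i \<and> i \<le> j + m)" and "j \<noteq> min i m"
    using \<open>i \<le> 2 * m\<close> by auto
  have "conv_matrix m x i j = 0"
    unfolding conv_matrix_def using outside by (rule if_not_P)
  then show "cond_split m y x i j = 0"
    using \<open>j \<noteq> min i m\<close> by (simp only: cond_split_def if_False mult_zero_right div_0 if_cancel)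
qed (rule sum_cond_split_row)

lemma sum_ient_cond_split_row:
  assumes "\<forall>i\<le>2 * m. 0 \<le> y i" "\<forall>k\<le>m. 0 \<le> x k" "i \<le> 2 * m"
  shows "(\<Sum>j=0..m. ient (cond_split m y x i j) (conv_matrix m x i j)) = ient (y i) (conv m x i)"
proof (cases "conv m x i = 0")
  case True
  then have "conv_matrix m x i j = 0" if "j \<in> {0..m}" for j
    using sum_nonneg_eq_0_iff [of "{0..m}" "conv_matrix m x i"] sum_conv_matrix_row [OF assms(3)]
      conv_matrix_nonneg [OF assms(2)] that
    by auto
  then have "(\<Sum>j=0..m. ient (cond_split m y x i j) (conv_matrix m x i j))
      = (\<Sum>j=0..m. ient (cond_split m y x i j) 0)"
    by (intro sum.cong) simp_all
  also have "\<dots> = ient (\<Sum>j=0..m. cond_split m y x i j) 0"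
    using cond_split_in_Ycal [OF assms(1,2)] assms(3) by (intro sum_ient_zero_right) (auto simp: Ycal_def)
  finally show ?thesis
    using True sum_cond_split_row [OF assms(3)] by simp
next
  case False
  let ?w = "conv_matrix m x i"
  have "(\<Sum>j=0..m. ient (cond_split m y x i j) (?w j))
      = (\<Sum>j=0..m. ient (y i * ?w j / (\<Sum>j=0..m. ?w j)) (?w j))"
    using False by (simp add: cond_split_def sum_conv_matrix_row [OF assms(3)])
  also have "\<dots> = ient (y i) (\<Sum>j=0..m. ?w j)"
  proof (rule sum_ient_proportional)
    show "0 < (\<Sum>j=0..m. ?w j)"
      using False conv_nonneg [OF assms(2), of i] sum_conv_matrix_row [OF assms(3)] by simp
  qed (use assms conv_matrix_nonneg [OF assms(2)] in auto)
  finally show ?thesis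
    using sum_conv_matrix_row [OF assms(3)] by simp
qed

lemma idiv_cond_split:
  assumes "\<forall>i\<le>2 * m. 0 \<le> y i" "\<forall>k\<le>m. 0 \<le> x k"
  shows "idiv (matidx m) (\<lambda>(i, j). cond_split m y x i j) (\<lambda>(i, j). conv_matrix m x i j)
           = idiv {0..2 * m} y (conv m x)"
  unfolding matidx_def idiv_product unfolding idiv_def
  using sum_ient_cond_split_row [OF assms] by (intro sum.cong) auto

theorem proposition3:
  fixes m :: nat and y :: "nat \<Rightarrow> real"
  assumes "m \<ge> 1"
    and "\<forall>i\<le>2*m. y i \<ge> 0"
  shows "\<exists>x0 Y0 W0.
           (\<forall>k\<le>m. x0 k \<ge> 0) \<and> Y0 \<in> Ycal m y \<and> W0 \<in> Wcal m
         \<and> (\<forall>x. (\<forall>k\<le>m. x k \<ge> 0) \<longrightarrow>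
                 idiv {0..2*m} y (conv m x0) \<le> idiv {0..2*m} y (conv m x))
         \<and> (\<forall>Y\<in>Ycal m y. \<forall>W\<in>Wcal m.
                 idiv (matidx m) (\<lambda>(i,j). Y0 i j) (\<lambda>(i,j). W0 i j)
                   \<le> idiv (matidx m) (\<lambda>(i,j). Y i j) (\<lambda>(i,j). W i j))
         \<and> idiv {0..2*m} y (conv m x0)
             = idiv (matidx m) (\<lambda>(i,j). Y0 i j) (\<lambda>(i,j). W0 i j)"
proof -
  obtain x0 where x0: "\<forall>k\<le>m. 0 \<le> x0 k"
    and x0_min: "\<forall>x. (\<forall>k\<le>m. 0 \<le> x k) \<longrightarrow> idiv {0..2*m} y (conv m x0) \<le> idiv {0..2*m} y (conv m x)"
    using idiv_conv_attains_min [OF assms(2)] by blast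
  define Y0 where "Y0 = cond_split m y x0"
  define W0 where "W0 = conv_matrix m x0"
  have Y0_eq: "idiv (matidx m) (\<lambda>(i,j). Y0 i j) (\<lambda>(i,j). W0 i j) = idiv {0..2*m} y (conv m x0)"
    unfolding Y0_def W0_def by (rule idiv_cond_split [OF assms(2) x0])
  have "Y0 \<in> Ycal m y"
    unfolding Y0_def by (rule cond_split_in_Ycal [OF assms(2) x0])
  moreover have "W0 \<in> Wcal m"
    unfolding Wcal_iff_conv_matrix W0_def using x0 by blast
  moreover have "\<forall>Y\<in>Ycal m y. \<forall>W\<in>Wcal m. idiv (matidx m) (\<lambda>(i,j). Y0 i j) (\<lambda>(i,j). W0 i j)
          \<le> idiv (matidx m) (\<lambda>(i,j). Y i j) (\<lambda>(i,j). W i j)"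
  proof (intro ballI)
    fix Y W assume "Y \<in> Ycal m y" "W \<in> Wcal m"
    from idiv_conv_le_idiv_matrix [OF this]
    obtain x where "\<forall>k\<le>m. 0 \<le> x k"
      and "idiv {0..2*m} y (conv m x) \<le> idiv (matidx m) (\<lambda>(i,j). Y i j) (\<lambda>(i,j). W i j)"
      by (elim exE conjE)
    then show "idiv (matidx m) (\<lambda>(i,j). Y0 i j) (\<lambda>(i,j). W0 i j)
          \<le> idiv (matidx m) (\<lambda>(i,j). Y i j) (\<lambda>(i,j). W i j)"
      unfolding Y0_eq using x0_min order_trans by blast
  qed
  ultimately show ?thesis
    using x0 x0_min Y0_eq [symmetric] by (intro exI [of _ x0] exI [of _ Y0] exI [of _ W0] conjI)
qed

end
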